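(* Let $G$ be a simple undirected graph of order $n\geq 6$ such that $\rho(G)\geq \rho(K_{2,n-2})$. Then $G$ contains a chorded cycle unless $G\cong K_{2,n-2}$.
   Context: All graphs are finite, simple and undirected. $\rho(G)$ denotes the spectral radius of $G$, i.e. the largest eigenvalue of its adjacency matrix $A(G)=(a_{u,v})$, where $a_{u,v}=1$ if $u,v$ are adjacent and $a_{u,v}=0$ otherwise. $K_{2,n-2}$ is the complete bipartite graph with parts of sizes $2$ and $n-2$. A chord of a cycle $C$ is an edge joining two non-consecutive vertices of $C$. A cycle $C$ in a graph $G$ is chorded if the subgraph of $G$ induced by the vertex set of $C$ contains at least one chord of $C$. *)

theory Defs
  imports Complex_Main
begin

definition simple_graph :: "'a set \<Rightarrow> ('a \<Rightarrow> 'a \<Rightarrow> bool) \<Rightarrow> bool" where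
  "simple_graph V E \<longleftrightarrow> finite V \<and> (\<forall>u v. E u v \<longrightarrow> u \<in> V \<and> v \<in> V)
     \<and> (\<forall>u v. E u v \<longrightarrow> E v u) \<and> (\<forall>v. \<not> E v v)"

definition adj :: "('a \<Rightarrow> 'a \<Rightarrow> bool) \<Rightarrow> 'a \<Rightarrow> 'a \<Rightarrow> real" where
  "adj E u v = (if E u v then 1 else 0)"

definition adj_eigenvalue :: "'a set \<Rightarrow> ('a \<Rightarrow> 'a \<Rightarrow> bool) \<Rightarrow> real \<Rightarrow> bool" where
  "adj_eigenvalue V E lam \<longleftrightarrow> (\<exists>x :: 'a \<Rightarrow> real. (\<exists>v\<in>V. x v \<noteq> 0) \<and>
      (\<forall>u\<in>V. (\<Sum>v\<in>V. adj E u v * x v) = lam * x u))"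

definition spectral_radius :: "'a set \<Rightarrow> ('a \<Rightarrow> 'a \<Rightarrow> bool) \<Rightarrow> real" where
  "spectral_radius V E = Max {lam. adj_eigenvalue V E lam}"

text \<open>The complete bipartite graph K_{2,n-2} on vertex set {0..<n}, parts {0,1}
  and {2..<n}.\<close>
definition K2_edges :: "nat \<Rightarrow> nat \<Rightarrow> nat \<Rightarrow> bool" where
  "K2_edges n u v \<longleftrightarrow> u < n \<and> v < n \<and> ((u < 2 \<and> 2 \<le> v) \<or> (v < 2 \<and> 2 \<le> u))"

definition graph_iso :: "'a set \<Rightarrow> ('a \<Rightarrow> 'a \<Rightarrow> bool) \<Rightarrow> 'b set \<Rightarrow> ('b \<Rightarrow> 'b \<Rightarrow> bool) \<Rightarrow> bool" where
  "graph_iso V E V' E' \<longleftrightarrow> (\<exists>f. bij_betw f V V' \<and> (\<forall>u\<in>V. \<forall>v\<in>V. E u v \<longleftrightarrow> E' (f u) (f v)))"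

definition is_cycle :: "'a set \<Rightarrow> ('a \<Rightarrow> 'a \<Rightarrow> bool) \<Rightarrow> 'a list \<Rightarrow> bool" where
  "is_cycle V E cs \<longleftrightarrow> length cs \<ge> 3 \<and> distinct cs \<and> set cs \<subseteq> V \<and>
     (\<forall>i < length cs. E (cs ! i) (cs ! ((i + 1) mod length cs)))"

definition has_chord :: "('a \<Rightarrow> 'a \<Rightarrow> bool) \<Rightarrow> 'a list \<Rightarrow> bool" where
  "has_chord E cs \<longleftrightarrow> (\<exists>i < length cs. \<exists>j < length cs. i \<noteq> j \<and>
     j \<noteq> (i + 1) mod length cs \<and> i \<noteq> (j + 1) mod length cs \<and> E (cs ! i) (cs ! j))"

definition has_chorded_cycle :: "'a set \<Rightarrow> ('a \<Rightarrow> 'a \<Rightarrow> bool) \<Rightarrow> bool" where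
  "has_chorded_cycle V E \<longleftrightarrow> (\<exists>cs. is_cycle V E cs \<and> has_chord E cs)"

end

theory Submission
  imports Defs "Jordan_Normal_Form.Char_Poly"
begin

(* Suppose G has no chorded cycle and an eigenvalue l >= sqrt (2n - 4), the spectral radius of
   K_{2,n-2}. Scale an eigenvector y so that max |y| = y v = 1, and let N be the neighbourhood of v
   and W the set of remaining vertices. Counting walks of length two from v gives
   l^2 = sum_w codeg w * y w, where codeg w is the number of common neighbours of v and w.
   Chordlessness forces codeg <= 1 on N; it also forces the common neighbours with v of a vertex
   w in W with codeg w >= 2 to have no neighbour in N, and those of a vertex with codeg >= 3 to be
   disjoint from those of every other such vertex. If codeg <= 1 on W, comparing with
   l^2 >= 2n - 4 yields n < 6. Otherwise a counting bound on the codegrees over W must be tight,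
   which forces N to be independent and completely joined to W, so that G is K_{2,n-2}. *)

lemma eigenvalue_iff_eigenfunction:
  fixes A :: "'b::field mat"
  assumes A: "A \<in> carrier_mat n n"
  shows "eigenvalue A k \<longleftrightarrow>
    (\<exists>p. (\<exists>i<n. p i \<noteq> 0) \<and> (\<forall>i<n. (\<Sum>j<n. A $$ (i,j) * p j) = k * p i))"
proof
  assume "eigenvalue A k"
  then obtain v where v: "v \<in> carrier_vec n" "v \<noteq> 0\<^sub>v n" "A *\<^sub>v v = k \<cdot>\<^sub>v v"
    using A unfolding eigenvalue_def eigenvector_def by auto
  have "\<exists>i<n. v $ i \<noteq> 0"
    using v(1,2) by (metis eq_vecI carrier_vecD index_zero_vec)
  moreover have "(\<Sum>j<n. A $$ (i,j) * v $ j) = k * v $ i" if "i < n" for i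
    using arg_cong[OF v(3), of "\<lambda>w. w $ i"] A v(1) that
    by (simp add: scalar_prod_def lessThan_atLeast0)
  ultimately show "\<exists>p. (\<exists>i<n. p i \<noteq> 0) \<and> (\<forall>i<n. (\<Sum>j<n. A $$ (i,j) * p j) = k * p i)"
    by blast
next
  assume "\<exists>p. (\<exists>i<n. p i \<noteq> 0) \<and> (\<forall>i<n. (\<Sum>j<n. A $$ (i,j) * p j) = k * p i)"
  then obtain p where p: "\<exists>i<n. p i \<noteq> 0" "\<forall>i<n. (\<Sum>j<n. A $$ (i,j) * p j) = k * p i"
    by blast
  have "vec n p \<noteq> 0\<^sub>v n" using p(1) by (metis index_vec index_zero_vec(1))
  moreover have "A *\<^sub>v vec n p = k \<cdot>\<^sub>v vec n p"
    using A p(2) by (intro eq_vecI) (auto simp: scalar_prod_def lessThan_atLeast0)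
  ultimately show "eigenvalue A k"
    using A unfolding eigenvalue_def eigenvector_def by (intro exI[of _ "vec n p"]) auto
qed

definition adj_mat :: "('a \<Rightarrow> 'a \<Rightarrow> bool) \<Rightarrow> (nat \<Rightarrow> 'a) \<Rightarrow> nat \<Rightarrow> real mat" where
  "adj_mat E f n = mat n n (\<lambda>(i,j). adj E (f i) (f j))"

lemma adj_mat_carrier: "adj_mat E f n \<in> carrier_mat n n"
  by (simp add: adj_mat_def)

lemma adj_eigenvalue_iff_eigenvalue_adj_mat:
  assumes f: "bij_betw f {0..<n} V"
  shows "adj_eigenvalue V E k \<longleftrightarrow> eigenvalue (adj_mat E f n) k"
proof -
  have sum_V: "(\<Sum>v\<in>V. g v) = (\<Sum>j<n. g (f j))" for g :: "'a \<Rightarrow> real"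
    using sum.reindex_bij_betw[OF f, of g] by (simp add: atLeast0LessThan)
  have f_img: "V = f ` {..<n}"
    using f by (simp add: bij_betw_def atLeast0LessThan)
  define g where "g = the_inv_into {0..<n} f"
  have g_f: "g (f i) = i" if "i < n" for i
    using f that unfolding g_def bij_betw_def by (auto intro: the_inv_into_f_f)
  have "adj_eigenvalue V E k \<longleftrightarrow>
      (\<exists>p. (\<exists>i<n. p i \<noteq> 0) \<and> (\<forall>i<n. (\<Sum>j<n. adj E (f i) (f j) * p j) = k * p i))"
  proof
    assume "adj_eigenvalue V E k"
    then obtain x where "\<exists>v\<in>V. x v \<noteq> 0" "\<forall>u\<in>V. (\<Sum>v\<in>V. adj E u v * x v) = k * x u"
      unfolding adj_eigenvalue_def by blast
    then show "\<exists>p. (\<exists>i<n. p i \<noteq> 0) \<and> (\<forall>i<n. (\<Sum>j<n. adj E (f i) (f j) * p j) = k * p i)"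
      unfolding sum_V unfolding f_img by (intro exI[of _ "x \<circ> f"]) auto
  next
    assume "\<exists>p. (\<exists>i<n. p i \<noteq> 0) \<and> (\<forall>i<n. (\<Sum>j<n. adj E (f i) (f j) * p j) = k * p i)"
    then obtain p where "\<exists>i<n. p i \<noteq> 0" "\<forall>i<n. (\<Sum>j<n. adj E (f i) (f j) * p j) = k * p i"
      by blast
    then show "adj_eigenvalue V E k"
      unfolding adj_eigenvalue_def sum_V unfolding f_img
      by (intro exI[of _ "p \<circ> g"]) (auto simp: g_f)
  qed
  then show ?thesis
    unfolding eigenvalue_iff_eigenfunction[OF adj_mat_carrier] by (simp add: adj_mat_def)
qed

lemma symmetric_real_mat_has_eigenvalue:
  fixes A :: "real mat"
  assumes A: "A \<in> carrier_mat n n" and "0 < n"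
    and sym: "\<And>i j. i < n \<Longrightarrow> j < n \<Longrightarrow> A $$ (i,j) = A $$ (j,i)"
  shows "\<exists>k. eigenvalue A k"
proof -
  define Ac where "Ac = map_mat complex_of_real A"
  have Ac: "Ac \<in> carrier_mat n n" using A by (simp add: Ac_def)
  obtain as where as: "char_poly Ac = (\<Prod>a\<leftarrow>as. [:- a, 1:])" "length as = n"
    using char_poly_factorized[OF Ac] by blast
  define \<mu> where "\<mu> = hd as"
  have root: "poly (char_poly Ac) \<mu> = 0"
    using \<open>0 < n\<close> as unfolding \<mu>_def by (cases as) auto
  then obtain z where z_ne: "\<exists>i<n. z i \<noteq> 0"
    and z: "\<And>i. i < n \<Longrightarrow> (\<Sum>j<n. Ac $$ (i,j) * z j) = \<mu> * z i"
    using eigenvalue_root_char_poly[OF Ac] eigenvalue_iff_eigenfunction[OF Ac] by blast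
  \<comment> \<open>the Hermitian form of A at z is real by symmetry and equals \<open>\<mu> |z|\<^sup>2\<close>\<close>
  define Q where "Q = (\<Sum>i<n. \<Sum>j<n. of_real (A $$ (i,j)) * cnj (z i) * z j)"
  define s where "s = (\<Sum>i<n. (Re (z i))\<^sup>2 + (Im (z i))\<^sup>2)"
  have "Q = (\<Sum>i<n. cnj (z i) * (\<Sum>j<n. Ac $$ (i,j) * z j))"
    using A unfolding Q_def Ac_def by (simp add: sum_distrib_left mult_ac)
  also have "\<dots> = (\<Sum>i<n. \<mu> * (cnj (z i) * z i))"
    by (intro sum.cong) (simp_all add: z)
  also have "\<dots> = \<mu> * of_real s"
    unfolding s_def of_real_sum by (simp add: sum_distrib_left complex_mult_cnj mult_ac)
  finally have Q_eq: "Q = \<mu> * of_real s" .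
  have "cnj Q = (\<Sum>j<n. \<Sum>i<n. of_real (A $$ (j,i)) * cnj (z i) * z j)"
    unfolding Q_def by (simp add: cnj_sum mult_ac)
  also have "\<dots> = Q"
    unfolding Q_def by (subst sum.swap) (simp add: sym)
  finally have "cnj \<mu> * of_real s = \<mu> * of_real s" unfolding Q_eq by simp
  moreover have "s > 0"
  proof -
    obtain i where "i < n" "z i \<noteq> 0" using z_ne by blast
    then have "0 < (Re (z i))\<^sup>2 + (Im (z i))\<^sup>2" by (simp add: complex_neq_0)
    also have "\<dots> \<le> s" unfolding s_def using \<open>i < n\<close> by (intro member_le_sum) auto
    finally show ?thesis .
  qed
  ultimately have "cnj \<mu> = \<mu>" by simp
  then have "Im \<mu> = 0" using complex_eq_iff[of "cnj \<mu>" \<mu>] by simp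
  then have \<mu>_real: "\<mu> = of_real (Re \<mu>)" by (simp add: complex_eq_iff)
  have "of_real (poly (char_poly A) (Re \<mu>)) = poly (char_poly Ac) \<mu>"
    unfolding Ac_def of_real_hom.char_poly_hom[OF A]
    by (subst \<mu>_real) (rule of_real_hom.poly_map_poly[symmetric])
  then have "poly (char_poly A) (Re \<mu>) = 0" using root by simp
  then show ?thesis using eigenvalue_root_char_poly[OF A] by blast
qed

lemma finite_adj_eigenvalues:
  assumes "finite V"
  shows "finite {k. adj_eigenvalue V E k}"
proof -
  obtain f where f: "bij_betw f {0..<card V} V"
    using ex_bij_betw_nat_finite[OF assms] by blast
  let ?A = "adj_mat E f (card V)"
  have "char_poly ?A \<noteq> 0"
    using degree_monic_char_poly[OF adj_mat_carrier, of E f "card V"] by auto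
  then have "finite {k. poly (char_poly ?A) k = 0}" by (rule poly_roots_finite)
  moreover have "{k. adj_eigenvalue V E k} \<subseteq> {k. poly (char_poly ?A) k = 0}"
    using adj_eigenvalue_iff_eigenvalue_adj_mat[OF f, of E]
      eigenvalue_root_char_poly[OF adj_mat_carrier, of E f "card V"] by auto
  ultimately show ?thesis by (rule finite_subset[rotated])
qed

lemma adj_eigenvalue_exists:
  assumes G: "simple_graph V E" and "V \<noteq> {}"
  shows "\<exists>k. adj_eigenvalue V E k"
proof -
  have "finite V" using G by (simp add: simple_graph_def)
  then obtain f where f: "bij_betw f {0..<card V} V"
    using ex_bij_betw_nat_finite by blast
  have "\<exists>k. eigenvalue (adj_mat E f (card V)) k"
  proof (rule symmetric_real_mat_has_eigenvalue[OF adj_mat_carrier])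
    show "0 < card V" using \<open>finite V\<close> \<open>V \<noteq> {}\<close> by (simp add: card_gt_0_iff)
    show "adj_mat E f (card V) $$ (i,j) = adj_mat E f (card V) $$ (j,i)"
      if "i < card V" "j < card V" for i j
      using G that by (auto simp: adj_mat_def adj_def simple_graph_def)
  qed
  then show ?thesis using adj_eigenvalue_iff_eigenvalue_adj_mat[OF f] by blast
qed

lemma adj_eigenvalue_le_spectral_radius:
  assumes "finite V" and "adj_eigenvalue V E k"
  shows "k \<le> spectral_radius V E"
  unfolding spectral_radius_def
  using finite_adj_eigenvalues[OF assms(1)] assms(2) by (intro Max_ge) auto

lemma adj_eigenvalue_spectral_radius:
  assumes "simple_graph V E" and "V \<noteq> {}"
  shows "adj_eigenvalue V E (spectral_radius V E)"
proof -
  have "finite V" using assms(1) by (simp add: simple_graph_def)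
  then have "spectral_radius V E \<in> {k. adj_eigenvalue V E k}"
    unfolding spectral_radius_def using adj_eigenvalue_exists[OF assms]
    by (intro Max_in finite_adj_eigenvalues) auto
  then show ?thesis by simp
qed

lemma adj_eigenvalue_normalised_eigenvector:
  assumes "finite V" and "adj_eigenvalue V E k"
  obtains v y where "v \<in> V" and "y v = 1" and "\<And>u. u \<in> V \<Longrightarrow> \<bar>y u\<bar> \<le> 1"
    and "\<And>u. u \<in> V \<Longrightarrow> (\<Sum>w\<in>V. adj E u w * y w) = k * y u"
proof -
  obtain x where x_ne: "\<exists>v\<in>V. x v \<noteq> 0"
    and x: "\<And>u. u \<in> V \<Longrightarrow> (\<Sum>w\<in>V. adj E u w * x w) = k * x u"
    using assms(2) unfolding adj_eigenvalue_def by blast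
  have "Max ((\<lambda>u. \<bar>x u\<bar>) ` V) \<in> (\<lambda>u. \<bar>x u\<bar>) ` V"
    using assms(1) x_ne by (intro Max_in) auto
  then obtain v where v: "v \<in> V" "\<bar>x v\<bar> = Max ((\<lambda>u. \<bar>x u\<bar>) ` V)" by auto
  then have x_max: "\<bar>x u\<bar> \<le> \<bar>x v\<bar>" if "u \<in> V" for u
    using assms(1) that by simp
  have "x v \<noteq> 0" using x_ne x_max by force
  show thesis
  proof (rule that[of v "\<lambda>u. x u / x v"])
    show "\<bar>x u / x v\<bar> \<le> 1" if "u \<in> V" for u
      using x_max[OF that] \<open>x v \<noteq> 0\<close> by (simp add: abs_divide divide_le_eq_1)
    show "(\<Sum>w\<in>V. adj E u w * (x w / x v)) = k * (x u / x v)" if "u \<in> V" for u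
      using x[OF that] by (simp add: sum_divide_distrib[symmetric])
  qed (use v \<open>x v \<noteq> 0\<close> in auto)
qed

lemma sum_adj_eq_card: "finite A \<Longrightarrow> (\<Sum>w\<in>A. adj E u w) = real (card {w\<in>A. E u w})"
  by (simp add: adj_def sum.If_cases Int_def)

lemma abs_sum_adj_le_card:
  assumes "finite A" and "\<And>w. w \<in> A \<Longrightarrow> \<bar>y w\<bar> \<le> 1"
  shows "\<bar>\<Sum>w\<in>A. adj E u w * y w\<bar> \<le> card {w\<in>A. E u w}"
proof -
  have "\<bar>\<Sum>w\<in>A. adj E u w * y w\<bar> \<le> (\<Sum>w\<in>A. \<bar>adj E u w * y w\<bar>)"
    by (rule sum_abs)
  also have "\<dots> \<le> (\<Sum>w\<in>A. adj E u w)"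
    using assms(2) by (intro sum_mono) (auto simp: adj_def)
  finally show ?thesis using sum_adj_eq_card[OF assms(1)] by simp
qed

lemma K2_adj_eigenvalue:
  assumes n: "3 \<le> n"
  shows "adj_eigenvalue {0..<n} (K2_edges n) (sqrt (2 * real n - 4))"
proof -
  define r where "r = sqrt (2 * real n - 4)"
  have r_sq: "r * r = 2 * real n - 4" using n by (simp add: r_def)
  define x where "x i = (if i < 2 then r / 2 else 1)" for i :: nat
  have split: "{0..<n} = {0,1} \<union> {2..<n}" using n by auto
  have sum_split: "(\<Sum>v\<in>{0..<n}. g v) = g 0 + g 1 + (\<Sum>v\<in>{2..<n}. g v)" for g :: "nat \<Rightarrow> real"
    unfolding split by (subst sum.union_disjoint) auto
  show ?thesis unfolding adj_eigenvalue_def r_def[symmetric]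
  proof (intro exI[of _ x] conjI ballI)
    show "\<exists>v\<in>{0..<n}. x v \<noteq> 0" using n by (intro bexI[of _ 2]) (auto simp: x_def)
  next
    fix u assume u: "u \<in> {0..<n}"
    show "(\<Sum>v\<in>{0..<n}. adj (K2_edges n) u v * x v) = r * x u"
    proof (cases "u < 2")
      case True
      have "(\<Sum>v\<in>{2..<n}. adj (K2_edges n) u v * x v) = (\<Sum>v\<in>{2..<n}. 1)"
        using True u by (intro sum.cong) (auto simp: adj_def K2_edges_def x_def)
      then have "(\<Sum>v\<in>{0..<n}. adj (K2_edges n) u v * x v) = real n - 2"
        unfolding sum_split using True n by (simp add: adj_def K2_edges_def)
      then show ?thesis using True n r_sq by (simp add: x_def)
    next
      case False
      then have "(\<Sum>v\<in>{0..<n}. adj (K2_edges n) u v * x v) = r"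
        unfolding sum_split using u n by (auto simp: adj_def K2_edges_def x_def)
      then show ?thesis using False by (simp add: x_def)
    qed
  qed
qed

lemma graph_iso_K2_edges:
  assumes V: "V = {a, b} \<union> R" and ab: "a \<noteq> b" "a \<notin> R" "b \<notin> R"
    and R: "finite R" "card R + 2 = n"
    and E: "\<And>x y. x \<in> V \<Longrightarrow> y \<in> V \<Longrightarrow>
      E x y \<longleftrightarrow> (x \<in> {a, b} \<and> y \<in> R) \<or> (x \<in> R \<and> y \<in> {a, b})"
  shows "graph_iso V E {0..<n} (K2_edges n)"
proof -
  obtain g where g: "bij_betw g R {2..<n}"
    using finite_same_card_bij[OF R(1), of "{2..<n}"] R(2) by auto
  define f where "f = g(a := 0, b := 1)"
  have "bij_betw f R {2..<n}"
    using g ab by (subst bij_betw_cong[of R f g]) (auto simp: f_def)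
  moreover have "bij_betw f {a, b} {0, 1}"
    using ab by (auto simp: f_def bij_betw_def)
  ultimately have "bij_betw f ({a, b} \<union> R) ({0, 1} \<union> {2..<n})"
    by (intro bij_betw_combine) auto
  moreover have "{0, 1} \<union> {2..<n} = {0..<n}" using R(2) by auto
  ultimately have bij: "bij_betw f V {0..<n}" using V by simp
  have f_range: "f x < n" if "x \<in> V" for x
    using bij that by (auto simp: bij_betw_def)
  have g_ge: "2 \<le> g x" if "x \<in> R" for x
    using bij_betw_apply[OF g that] by simp
  have f_part: "f x < 2 \<longleftrightarrow> x \<in> {a, b}" if x: "x \<in> V" for x
  proof -
    consider "x = a" | "x = b" | "x \<in> R" "x \<noteq> a" "x \<noteq> b" using x V by auto
    then show ?thesis using ab g_ge[of x] by cases (auto simp: f_def)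
  qed
  have R_iff: "x \<in> R \<longleftrightarrow> x \<notin> {a, b}" if "x \<in> V" for x
    using that V ab by auto
  have "E x y \<longleftrightarrow> K2_edges n (f x) (f y)" if "x \<in> V" "y \<in> V" for x y
    using f_range[OF that(1)] f_range[OF that(2)] f_part[OF that(1)] f_part[OF that(2)]
      R_iff[OF that(1)] R_iff[OF that(2)]
    unfolding E[OF that] K2_edges_def by (auto simp: not_less)
  then show ?thesis unfolding graph_iso_def using bij by blast
qed

lemma sum_card_large_family:
  fixes S :: "'i \<Rightarrow> 'a set"
  assumes fin: "finite I" "finite U" and "I \<noteq> {}"
    and large: "\<And>i. i \<in> I \<Longrightarrow> 2 \<le> card (S i)"
    and sub: "\<And>i. i \<in> I \<Longrightarrow> S i \<subseteq> U"
    and disj: "\<And>i j. i \<in> I \<Longrightarrow> j \<in> I \<Longrightarrow> i \<noteq> j \<Longrightarrow> 3 \<le> card (S i) \<Longrightarrow> S i \<inter> S j = {}"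
  shows "(\<Sum>i\<in>I. card (S i)) + 2 \<le> 2 * card I + card U"
    and "(\<Sum>i\<in>I. card (S i)) + 2 = 2 * card I + card U \<Longrightarrow> \<forall>i\<in>I. S i = U"
proof -
  define I2 where "I2 = {i\<in>I. card (S i) = 2}"
  define I3 where "I3 = {i\<in>I. 3 \<le> card (S i)}"
  have I_split: "I = I2 \<union> I3" and I_disj: "I2 \<inter> I3 = {}"
    using large by (force simp: I2_def I3_def)+
  have fin_I: "finite I2" "finite I3" using fin(1) by (auto simp: I2_def I3_def)
  have sum_I: "(\<Sum>i\<in>I. card (S i)) = 2 * card I2 + (\<Sum>i\<in>I3. card (S i))"
    using fin_I I_disj by (subst I_split) (simp add: sum.union_disjoint I2_def)
  have card_I: "card I = card I2 + card I3"
    using fin_I I_disj by (subst I_split) (simp add: card_Un_disjoint)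
  define D2 where "D2 = (\<Union>i\<in>I2. S i)"
  define D3 where "D3 = (\<Union>i\<in>I3. S i)"
  have D_sub: "D2 \<subseteq> U" "D3 \<subseteq> U" using sub by (auto simp: D2_def D3_def I2_def I3_def)
  have fin_D: "finite D2" "finite D3" using D_sub fin(2) by (auto intro: finite_subset)
  have disj3: "S i \<inter> S j = {}" if "i \<in> I3" "j \<in> I" "i \<noteq> j" for i j
    using that by (intro disj) (auto simp: I3_def)
  have card_D3: "card D3 = (\<Sum>i\<in>I3. card (S i))"
    unfolding D3_def using fin_I(2) fin(2) sub disj3
    by (intro card_UN_disjoint) (auto simp: I3_def intro: finite_subset)
  have "D2 \<inter> D3 = {}"
    unfolding D2_def D3_def using disj3 I_disj by (fastforce simp: I2_def)
  then have card_D: "card D2 + card D3 \<le> card U"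
    using card_Un_disjoint[OF fin_D] card_mono[OF fin(2), of "D2 \<union> D3"] D_sub by simp
  have card_D2: "2 \<le> card D2" if ne: "I2 \<noteq> {}"
  proof -
    obtain i where i: "i \<in> I2" using ne by blast
    then have "card (S i) \<le> card D2"
      using fin_D(1) by (intro card_mono) (auto simp: D2_def)
    then show ?thesis using i by (simp add: I2_def)
  qed
  show "(\<Sum>i\<in>I. card (S i)) + 2 \<le> 2 * card I + card U"
  proof (cases "I3 = {}")
    case True
    then show ?thesis
      using sum_I card_I card_D card_D2 I_split \<open>I \<noteq> {}\<close> by (simp add: D3_def)
  next
    case False
    then have "1 \<le> card I3" using fin_I(2) by (simp add: Suc_le_eq card_gt_0_iff)
    then show ?thesis using sum_I card_I card_D card_D3 by linarith
  qed
  assume eq: "(\<Sum>i\<in>I. card (S i)) + 2 = 2 * card I + card U"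
  show "\<forall>i\<in>I. S i = U"
  proof (cases "I3 = {}")
    case True
    then have "card U = 2" "I = I2"
      using eq sum_I card_I I_split by (auto simp: D3_def)
    then show ?thesis
      using sub fin(2) by (metis (mono_tags, lifting) I2_def card_subset_eq mem_Collect_eq order_refl)
  next
    case False
    then have "1 \<le> card I3" using fin_I(2) by (simp add: Suc_le_eq card_gt_0_iff)
    then have "card I3 = 1" "card D2 = 0" "card D3 = card U"
      using eq sum_I card_I card_D card_D3 by linarith+
    then have "I2 = {}" using card_D2 by fastforce
    obtain i0 where "I3 = {i0}" using \<open>card I3 = 1\<close> card_1_singletonE by blast
    then have "I = {i0}" "S i0 = U"
      using I_split \<open>I2 = {}\<close> \<open>card D3 = card U\<close> D_sub fin(2) card_subset_eq
      by (auto simp: D3_def)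
    then show ?thesis by simp
  qed
qed

lemma sum_card_family_bound:
  fixes S :: "'i \<Rightarrow> 'a set"
  assumes fin: "finite I" "finite U"
    and large_sub: "\<And>i. i \<in> I \<Longrightarrow> 2 \<le> card (S i) \<Longrightarrow> S i \<subseteq> U"
    and large_disj: "\<And>i j. i \<in> I \<Longrightarrow> j \<in> I \<Longrightarrow> i \<noteq> j \<Longrightarrow> 3 \<le> card (S i) \<Longrightarrow>
      2 \<le> card (S j) \<Longrightarrow> S i \<inter> S j = {}"
    and "\<exists>i\<in>I. 2 \<le> card (S i)"
  shows "(\<Sum>i\<in>I. card (S i)) + 2 + card {i\<in>I. card (S i) \<le> 1} \<le> 2 * card I + card U"
proof -
  define L where "L = {i\<in>I. 2 \<le> card (S i)}"
  define L' where "L' = {i\<in>I. card (S i) \<le> 1}"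
  have I_split: "I = L \<union> L'" and L_disj: "L \<inter> L' = {}" by (auto simp: L_def L'_def)
  have fin_L: "finite L" "finite L'" using fin(1) by (auto simp: L_def L'_def)
  have "(\<Sum>i\<in>L. card (S i)) + 2 \<le> 2 * card L + card U"
    using fin_L(1) fin(2) assms(5) large_sub large_disj
    by (intro sum_card_large_family(1)) (auto simp: L_def)
  moreover have "(\<Sum>i\<in>L'. card (S i)) \<le> card L'"
    using sum_mono[of L' "\<lambda>i. card (S i)" "\<lambda>_. 1"] by (auto simp: L'_def)
  moreover have "(\<Sum>i\<in>I. card (S i)) = (\<Sum>i\<in>L. card (S i)) + (\<Sum>i\<in>L'. card (S i))"
    "card I = card L + card L'"
    using fin_L L_disj by (subst I_split; simp add: sum.union_disjoint card_Un_disjoint)+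
  ultimately show ?thesis unfolding L'_def by linarith
qed

locale chordless_graph =
  fixes V :: "'a set" and E :: "'a \<Rightarrow> 'a \<Rightarrow> bool"
  assumes simple: "simple_graph V E"
    and chordless: "\<not> has_chorded_cycle V E"
begin

lemma finite_V: "finite V"
  using simple by (simp add: simple_graph_def)

lemma edge_sym: "E u w \<Longrightarrow> E w u"
  using simple by (simp add: simple_graph_def)

lemma edge_irrefl: "\<not> E u u"
  using simple by (simp add: simple_graph_def)

lemma edge_in_V: "E u w \<Longrightarrow> u \<in> V"
  using simple by (simp add: simple_graph_def)

lemma not_has_chord: "is_cycle V E cs \<Longrightarrow> \<not> has_chord E cs"
  using chordless by (auto simp: has_chorded_cycle_def)

lemma no_chorded_C4:
  assumes "distinct [a, b, c, d]" "E a b" "E b c" "E c d" "E d a"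
  shows "\<not> E a c"
proof
  assume "E a c"
  have "is_cycle V E [a, b, c, d]"
    unfolding is_cycle_def using assms edge_in_V by (auto simp: less_Suc_eq)
  moreover have "has_chord E [a, b, c, d]"
    unfolding has_chord_def using \<open>E a c\<close> by (intro exI[of _ 0] conjI exI[of _ 2]) auto
  ultimately show False using not_has_chord by blast
qed

lemma no_chorded_C5:
  assumes "distinct [a, b, c, d, e]" "E a b" "E b c" "E c d" "E d e" "E e a"
  shows "\<not> E a c"
proof
  assume "E a c"
  have "is_cycle V E [a, b, c, d, e]"
    unfolding is_cycle_def using assms edge_in_V by (auto simp: less_Suc_eq)
  moreover have "has_chord E [a, b, c, d, e]"
    unfolding has_chord_def using \<open>E a c\<close> by (intro exI[of _ 0] conjI exI[of _ 2]) auto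
  ultimately show False using not_has_chord by blast
qed

lemma no_chorded_C6:
  assumes "distinct [a, b, c, d, e, f]" "E a b" "E b c" "E c d" "E d e" "E e f" "E f a"
  shows "\<not> E a d"
proof
  assume "E a d"
  have "is_cycle V E [a, b, c, d, e, f]"
    unfolding is_cycle_def using assms edge_in_V by (auto simp: less_Suc_eq)
  moreover have "has_chord E [a, b, c, d, e, f]"
    unfolding has_chord_def using \<open>E a d\<close> by (intro exI[of _ 0] conjI exI[of _ 3]) auto
  ultimately show False using not_has_chord by blast
qed

lemma two_common_neighbours_nonadjacent:
  assumes "a \<noteq> b" "E x a" "E x b" "E y a" "E y b"
  shows "\<not> E x y"
proof
  assume "E x y"
  have "distinct [x, a, y, b]" using assms \<open>E x y\<close> edge_irrefl by auto
  then show False using no_chorded_C4[of x a y b] assms \<open>E x y\<close> edge_sym by blast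
qed

end

locale rooted_chordless_graph = chordless_graph +
  fixes v :: 'a
  assumes root_in_V: "v \<in> V"
begin

definition N :: "'a set" where
  "N = {u\<in>V. E v u}"

definition W :: "'a set" where
  "W = {w\<in>V. w \<noteq> v \<and> \<not> E v w}"

definition codeg :: "'a \<Rightarrow> nat" where
  "codeg w = card {u\<in>N. E w u}"

definition N0 :: "'a set" where
  "N0 = {u\<in>N. codeg u = 0}"

definition N1 :: "'a set" where
  "N1 = {u\<in>N. codeg u = 1}"

lemma finite_N: "finite N" and finite_W: "finite W"
  using finite_V by (auto simp: N_def W_def)

lemma finite_N0: "finite N0"
  using finite_N by (simp add: N0_def)

lemma root_notin: "v \<notin> N" "v \<notin> W"
  using edge_irrefl by (auto simp: N_def W_def)

lemma N_W_disjoint: "N \<inter> W = {}"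
  by (auto simp: N_def W_def)

lemma V_eq: "V = insert v (N \<union> W)"
  using root_in_V by (auto simp: N_def W_def)

lemma W_sub_V: "W \<subseteq> V" and N_sub_V: "N \<subseteq> V"
  by (auto simp: W_def N_def)

lemma N_root_edge: "u \<in> N \<Longrightarrow> E v u" "u \<in> N \<Longrightarrow> E u v"
  using edge_sym by (auto simp: N_def)

lemma W_root_nonedge: "w \<in> W \<Longrightarrow> \<not> E v w" "w \<in> W \<Longrightarrow> \<not> E w v"
  using edge_sym by (auto simp: W_def)

lemma card_V_eq: "card V = 1 + card N + card W"
  using finite_N finite_W root_notin N_W_disjoint
  by (subst V_eq) (simp add: card_Un_disjoint)

lemma sum_V_eq: "(\<Sum>w\<in>V. g w) = g v + (\<Sum>w\<in>N. g w) + (\<Sum>w\<in>W. g w)"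
  using finite_N finite_W root_notin N_W_disjoint
  by (subst V_eq) (simp add: sum.union_disjoint add.assoc)

lemma codeg_root: "codeg v = card N"
  by (simp add: codeg_def N_def)

lemma codeg_N_le_1:
  assumes u: "u \<in> N"
  shows "codeg u \<le> 1"
proof -
  have "a = b" if "a \<in> {z\<in>N. E u z}" "b \<in> {z\<in>N. E u z}" for a b
    using that u two_common_neighbours_nonadjacent[of a b v u] by (auto simp: N_def)
  then show ?thesis
    using finite_N card_le_Suc0_iff_eq[of "{z\<in>N. E u z}"] by (auto simp: codeg_def)
qed

lemma N_eq_N0_Un_N1: "N = N0 \<union> N1" and N0_N1_disjoint: "N0 \<inter> N1 = {}"
  using codeg_N_le_1 by (force simp: N0_def N1_def)+

lemma card_N_eq: "card N = card N0 + card N1"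
  using finite_N N0_N1_disjoint
  by (subst N_eq_N0_Un_N1) (simp add: card_Un_disjoint N0_def N1_def)

lemma W_large_codeg_sub_N0:
  assumes w: "w \<in> W" and large: "2 \<le> codeg w"
  shows "{u\<in>N. E w u} \<subseteq> N0"
proof
  fix u1 assume u1: "u1 \<in> {u\<in>N. E w u}"
  have "\<not> {u\<in>N. E w u} \<subseteq> {u1}"
    using large card_mono[of "{u1}" "{u\<in>N. E w u}"] by (auto simp: codeg_def)
  then obtain u2 where u2: "u2 \<in> N" "E w u2" "u2 \<noteq> u1" by blast
  have "\<not> E u1 z" if z: "z \<in> N" for z
  proof
    assume "E u1 z"
    show False
    proof (cases "z = u2")
      case True
      then show False
        using two_common_neighbours_nonadjacent[of v w u1 u2] \<open>E u1 z\<close> u1 u2 w edge_sym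
        by (auto simp: N_def W_def)
    next
      case False
      have "distinct [v, z, u1, w, u2]"
        using False \<open>E u1 z\<close> u1 u2 w z root_notin N_W_disjoint edge_irrefl by auto
      then show False
        using no_chorded_C5[of v z u1 w u2] \<open>E u1 z\<close> u1 u2 z edge_sym by (auto simp: N_def)
    qed
  qed
  then show "u1 \<in> N0"
    using u1 finite_N by (auto simp: N0_def codeg_def)
qed

lemma W_large_codeg_disjoint:
  assumes w: "w \<in> W" "w' \<in> W" "w \<noteq> w'" and large: "3 \<le> codeg w" "2 \<le> codeg w'"
  shows "{u\<in>N. E w u} \<inter> {u\<in>N. E w' u} = {}"
proof (rule ccontr)
  assume "{u\<in>N. E w u} \<inter> {u\<in>N. E w' u} \<noteq> {}"
  then obtain u where u: "u \<in> N" "E w u" "E w' u" by auto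
  have "\<not> {u\<in>N. E w' u} \<subseteq> {u}"
    using large(2) card_mono[of "{u}" "{u\<in>N. E w' u}"] by (auto simp: codeg_def)
  then obtain b where b: "b \<in> N" "E w' b" "b \<noteq> u" by blast
  have "card {u, b} \<le> 2" by (simp add: card_insert_le_m1)
  then have "\<not> {u\<in>N. E w u} \<subseteq> {u, b}"
    using large(1) card_mono[of "{u, b}" "{u\<in>N. E w u}"] by (auto simp: codeg_def)
  then obtain a where a: "a \<in> N" "E w a" "a \<noteq> u" "a \<noteq> b" by blast
  have "distinct [v, a, w, u, w', b]"
    using a b u w root_notin N_W_disjoint by auto
  then have "\<not> E v u"
    using no_chorded_C6[of v a w u w' b] a b u edge_sym by (auto simp: N_def)
  then show False using u by (simp add: N_def)
qed

lemma graph_iso_K2_if_single_W: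
  assumes N_indep: "\<And>u z. u \<in> N \<Longrightarrow> z \<in> N \<Longrightarrow> \<not> E u z"
    and W_complete: "\<And>u. u \<in> N \<Longrightarrow> E w0 u" and W: "W = {w0}"
  shows "graph_iso V E {0..<card V} (K2_edges (card V))"
proof (rule graph_iso_K2_edges[of V v w0 N])
  show "V = {v, w0} \<union> N" using V_eq W by auto
  show "v \<noteq> w0" "v \<notin> N" "w0 \<notin> N" using W root_notin N_W_disjoint by auto
  show "finite N" by (rule finite_N)
  show "card N + 2 = card V" using card_V_eq W by simp
  have w0_edge: "E w0 u" "E u w0" if "u \<in> N" for u
    using W_complete[OF that] edge_sym by auto
  fix x y assume "x \<in> V" "y \<in> V"
  then have "x = v \<or> x = w0 \<or> x \<in> N" "y = v \<or> y = w0 \<or> y \<in> N"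
    using V_eq W by auto
  then show "E x y \<longleftrightarrow> (x \<in> {v, w0} \<and> y \<in> N) \<or> (x \<in> N \<and> y \<in> {v, w0})"
    using N_indep N_root_edge w0_edge W_root_nonedge[of w0] W edge_irrefl
      \<open>v \<notin> N\<close> \<open>w0 \<notin> N\<close> by auto
qed

lemma graph_iso_K2_if_pair_N:
  assumes N_indep: "\<And>u z. u \<in> N \<Longrightarrow> z \<in> N \<Longrightarrow> \<not> E u z"
    and W_complete: "\<And>w u. w \<in> W \<Longrightarrow> u \<in> N \<Longrightarrow> E w u" and N: "N = {a, b}" "a \<noteq> b"
  shows "graph_iso V E {0..<card V} (K2_edges (card V))"
proof (rule graph_iso_K2_edges[of V a b "insert v W"])
  show "V = {a, b} \<union> insert v W" using V_eq N by auto
  show "a \<noteq> b" "a \<notin> insert v W" "b \<notin> insert v W"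
    using N root_notin N_W_disjoint by auto
  show "finite (insert v W)" using finite_W by simp
  show "card (insert v W) + 2 = card V"
    using card_V_eq N root_notin finite_W by simp
  have W_edge: "E w u" "E u w" if "w \<in> W" "u \<in> N" for w u
    using W_complete[OF that] edge_sym by auto
  have W_indep: "\<not> E w w'" if "w \<in> W" "w' \<in> W" for w w'
    using two_common_neighbours_nonadjacent[of a b w w'] W_edge that N by auto
  fix x y assume "x \<in> V" "y \<in> V"
  then have "x \<in> N \<or> x = v \<or> x \<in> W" "y \<in> N \<or> y = v \<or> y \<in> W"
    using V_eq by auto
  then show "E x y \<longleftrightarrow> (x \<in> {a, b} \<and> y \<in> insert v W) \<or> (x \<in> insert v W \<and> y \<in> {a, b})"
    using N_indep N_root_edge W_edge W_root_nonedge W_indep edge_irrefl root_notin N_W_disjoint N(1)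
    by auto
qed

lemma graph_iso_K2_if_W_complete_to_N:
  assumes N_indep: "\<And>u z. u \<in> N \<Longrightarrow> z \<in> N \<Longrightarrow> \<not> E u z"
    and W_complete: "\<And>w u. w \<in> W \<Longrightarrow> u \<in> N \<Longrightarrow> E w u"
    and "W \<noteq> {}" and "2 \<le> card N"
  shows "graph_iso V E {0..<card V} (K2_edges (card V))"
proof -
  obtain w0 where w0: "w0 \<in> W" using \<open>W \<noteq> {}\<close> by blast
  show ?thesis
  proof (cases "W = {w0}")
    case True
    then show ?thesis using graph_iso_K2_if_single_W N_indep W_complete w0 by blast
  next
    case False
    then obtain w1 where w1: "w1 \<in> W" "w1 \<noteq> w0" using w0 by blast
    have nbrs_W: "{u\<in>N. E w u} = N" if "w \<in> W" for w
      using W_complete[OF that] by auto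
    have "card N \<le> 2"
    proof (rule ccontr)
      assume "\<not> card N \<le> 2"
      then have "N = {}"
        using W_large_codeg_disjoint[OF w0 w1(1) w1(2)[symmetric]] nbrs_W[OF w0] nbrs_W[OF w1(1)]
        by (simp add: codeg_def)
      then show False using \<open>\<not> card N \<le> 2\<close> by simp
    qed
    then obtain a b where "N = {a, b}" "a \<noteq> b"
      using \<open>2 \<le> card N\<close> card_2_iff[of N] by auto
    then show ?thesis using graph_iso_K2_if_pair_N N_indep W_complete by blast
  qed
qed

end

locale chordless_eigenvector = rooted_chordless_graph +
  fixes l :: real and y :: "'a \<Rightarrow> real"
  assumes eigen: "\<And>u. u \<in> V \<Longrightarrow> (\<Sum>w\<in>V. adj E u w * y w) = l * y u"
    and y_root: "y v = 1"
    and y_bounded: "\<And>u. u \<in> V \<Longrightarrow> \<bar>y u\<bar> \<le> 1"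
    and order_ge_6: "6 \<le> card V"
    and l_nonneg: "0 \<le> l"
    and l_sq_ge: "2 * real (card V) - 4 \<le> l * l"
begin

lemma l_gt_2: "2 < l"
proof (rule ccontr)
  assume "\<not> 2 < l"
  then have "l * l \<le> 2 * 2" using l_nonneg by (intro mult_mono) auto
  then show False using l_sq_ge order_ge_6 by simp
qed

lemma y_le_1: "u \<in> V \<Longrightarrow> y u \<le> 1"
  using y_bounded by fastforce

lemma l_eq_sum_N: "l = (\<Sum>u\<in>N. y u)"
proof -
  have "l = (\<Sum>u\<in>V. adj E v u * y u)" using eigen[OF root_in_V] y_root by simp
  also have "\<dots> = (\<Sum>u\<in>V. if E v u then y u else 0)"
    by (intro sum.cong) (auto simp: adj_def)
  also have "\<dots> = (\<Sum>u\<in>N. y u)"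
    using finite_V by (simp add: N_def sum.inter_filter)
  finally show ?thesis .
qed

lemma eigen_N:
  assumes "u \<in> N"
  shows "l * y u = 1 + (\<Sum>w\<in>N. adj E u w * y w) + (\<Sum>w\<in>W. adj E u w * y w)"
proof -
  have "adj E u v = 1" using N_root_edge(2)[OF assms] by (simp add: adj_def)
  then show ?thesis
    using eigen[of u] assms sum_V_eq[of "\<lambda>w. adj E u w * y w"] y_root by (simp add: N_def)
qed

lemma l_sq_eq: "l * l = card N + (\<Sum>u\<in>N1. y u) + (\<Sum>w\<in>W. codeg w * y w)"
proof -
  have walks: "(\<Sum>u\<in>V. adj E v u * adj E u w) = codeg w" for w
  proof -
    have "(\<Sum>u\<in>V. adj E v u * adj E u w) = (\<Sum>u\<in>V. if E v u \<and> E w u then 1 else 0)"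
      by (intro sum.cong) (auto simp: adj_def dest: edge_sym)
    also have "\<dots> = card {u\<in>V. E v u \<and> E w u}"
      using finite_V by (simp add: sum.If_cases Int_def)
    also have "{u\<in>V. E v u \<and> E w u} = {u\<in>N. E w u}"
      by (auto simp: N_def)
    finally show ?thesis by (simp add: codeg_def)
  qed
  have "l * l = l * (\<Sum>u\<in>V. adj E v u * y u)"
    using eigen[OF root_in_V] y_root by simp
  also have "\<dots> = (\<Sum>u\<in>V. adj E v u * (l * y u))"
    by (simp add: sum_distrib_left mult_ac)
  also have "\<dots> = (\<Sum>u\<in>V. \<Sum>w\<in>V. adj E v u * adj E u w * y w)"
    by (intro sum.cong) (simp_all add: eigen[symmetric] sum_distrib_left mult.assoc)
  also have "\<dots> = (\<Sum>w\<in>V. codeg w * y w)"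
    by (subst sum.swap) (simp add: walks sum_distrib_right[symmetric])
  also have "\<dots> = card N + (\<Sum>u\<in>N. codeg u * y u) + (\<Sum>w\<in>W. codeg w * y w)"
    unfolding sum_V_eq by (simp add: codeg_root y_root)
  also have "(\<Sum>u\<in>N. codeg u * y u) = (\<Sum>u\<in>N1. y u)"
  proof -
    have "(\<Sum>u\<in>N. codeg u * y u) = (\<Sum>u\<in>N0. codeg u * y u) + (\<Sum>u\<in>N1. codeg u * y u)"
      using finite_N N0_N1_disjoint by (subst N_eq_N0_Un_N1) (simp add: sum.union_disjoint N0_def N1_def)
    then show ?thesis by (simp add: N0_def N1_def)
  qed
  finally show ?thesis .
qed

lemma sum_N1_le: "(\<Sum>u\<in>N1. y u) \<le> card N1"
  using sum_mono[of N1 y "\<lambda>_. 1"] y_le_1 N_sub_V by (auto simp: N1_def)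

lemma sum_codeg_y_le: "(\<Sum>w\<in>W. codeg w * y w) \<le> (\<Sum>w\<in>W. codeg w)"
  unfolding of_nat_sum using y_le_1 W_sub_V by (intro sum_mono mult_left_le) auto

lemma sum_codeg_lower_bound:
  "real (card N0) + 2 * real (card W) - 2 + (real (card N1) - (\<Sum>u\<in>N1. y u))
    \<le> real (\<Sum>w\<in>W. codeg w)"
  using sum_codeg_y_le l_sq_eq l_sq_ge card_V_eq card_N_eq by simp

lemma y_nonneg_on_N0:
  assumes u: "u \<in> N0" and "card W \<le> 1"
  shows "0 \<le> y u"
proof -
  have "\<bar>\<Sum>w\<in>N. adj E u w * y w\<bar> \<le> 0"
    using abs_sum_adj_le_card[OF finite_N, of y E u] y_bounded N_sub_V u
    by (auto simp: N0_def codeg_def)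
  moreover have "\<bar>\<Sum>w\<in>W. adj E u w * y w\<bar> \<le> card W"
    using abs_sum_adj_le_card[OF finite_W, of y E u] y_bounded W_sub_V
      card_mono[OF finite_W, of "{w\<in>W. E u w}"] by fastforce
  ultimately have "0 \<le> l * y u"
    using eigen_N[of u] u \<open>card W \<le> 1\<close> by (auto simp: N0_def)
  then show ?thesis using l_gt_2 by (simp add: zero_le_mult_iff)
qed

lemma low_codegree_impossible:
  assumes low: "\<And>w. w \<in> W \<Longrightarrow> codeg w \<le> 1"
  shows False
proof -
  define n where "n = card V"
  have sum_W: "(\<Sum>w\<in>W. codeg w) \<le> card W"
    using sum_mono[of W codeg "\<lambda>_. 1"] low by simp
  then have small: "card N0 + card W \<le> 2"
    using sum_codeg_lower_bound sum_N1_le by linarith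
  have "0 \<le> (\<Sum>u\<in>N0. y u)"
  proof (cases "N0 = {}")
    case False
    then have "1 \<le> card N0" using finite_N0 by (simp add: Suc_le_eq card_gt_0_iff)
    then have "card W \<le> 1" using small by linarith
    then show ?thesis using y_nonneg_on_N0 by (intro sum_nonneg)
  qed simp
  then have "(\<Sum>u\<in>N1. y u) \<le> l"
    using l_eq_sum_N finite_N N0_N1_disjoint
    by (subst (asm) N_eq_N0_Un_N1) (simp add: sum.union_disjoint N0_def N1_def)
  moreover have "(\<Sum>w\<in>W. codeg w * y w) \<le> card W"
    using sum_codeg_y_le sum_W by linarith
  ultimately have l_quad: "l * l - l \<le> real n - 1"
    using l_sq_eq card_V_eq unfolding n_def by linarith
  moreover have "2 * real n - 4 \<le> l * l" using l_sq_ge unfolding n_def .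
  ultimately have "real n - 3 \<le> l" by argo
  then have "(real n - 3) * (real n - 4) \<le> l * (l - 1)"
    using order_ge_6 unfolding n_def by (intro mult_mono) auto
  moreover have "0 \<le> (real n - 6) * (real n - 2)"
    using order_ge_6 unfolding n_def by simp
  ultimately show False using l_quad by (simp add: algebra_simps)
qed

lemma N1_without_W_neighbours_lt_1:
  assumes u: "u \<in> N1" and no_W: "\<And>w. w \<in> W \<Longrightarrow> \<not> E u w"
  shows "y u < 1"
proof -
  have "card {w\<in>W. E u w} = 0" using no_W by (simp add: card_eq_0_iff)
  then have "\<bar>\<Sum>w\<in>W. adj E u w * y w\<bar> \<le> 0"
    using abs_sum_adj_le_card[OF finite_W, of y E u] y_bounded W_sub_V by auto
  moreover have "\<bar>\<Sum>w\<in>N. adj E u w * y w\<bar> \<le> 1"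
    using abs_sum_adj_le_card[OF finite_N, of y E u] y_bounded N_sub_V u
    by (auto simp: N1_def codeg_def)
  ultimately have "l * y u \<le> 2" using eigen_N[of u] u by (auto simp: N1_def)
  then have "y u \<le> 2 / l" using l_gt_2 by (simp add: field_simps)
  also have "\<dots> < 1" using l_gt_2 by simp
  finally show ?thesis .
qed

lemma high_codegree_structure:
  assumes "\<exists>w\<in>W. 2 \<le> codeg w"
  shows "N1 = {}" and "\<And>w. w \<in> W \<Longrightarrow> {u\<in>N. E w u} = N0"
proof -
  have "(\<Sum>w\<in>W. codeg w) + 2 + card {w\<in>W. codeg w \<le> 1} \<le> 2 * card W + card N0"
    using sum_card_family_bound[of W N0 "\<lambda>w. {u\<in>N. E w u}", OF finite_W finite_N0
        W_large_codeg_sub_N0[unfolded codeg_def] W_large_codeg_disjoint[unfolded codeg_def]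
        assms[unfolded codeg_def]]
    by (simp add: codeg_def)
  \<comment> \<open>the eigenvalue bound forces this counting bound to be tight\<close>
  then have no_low: "card {w\<in>W. codeg w \<le> 1} = 0"
    and sum_eq: "(\<Sum>w\<in>W. codeg w) + 2 = 2 * card W + card N0"
    and sum_N1: "card N1 \<le> (\<Sum>u\<in>N1. y u)"
    using sum_codeg_lower_bound sum_N1_le by linarith+
  have large: "2 \<le> codeg w" if "w \<in> W" for w
    using no_low finite_W that by (auto simp: card_eq_0_iff)
  have "\<forall>w\<in>W. {u\<in>N. E w u} = N0"
  proof (rule sum_card_large_family(2)[of W N0 "\<lambda>w. {u\<in>N. E w u}"])
    show "finite W" by (rule finite_W)
    show "finite N0" by (rule finite_N0)
    show "W \<noteq> {}" using assms by blast
    show "2 \<le> card {u\<in>N. E w u}" if "w \<in> W" for w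
      using large[OF that] by (simp add: codeg_def)
    show "{u\<in>N. E w u} \<subseteq> N0" if "w \<in> W" for w
      using W_large_codeg_sub_N0 large that by blast
    show "{u\<in>N. E w u} \<inter> {u\<in>N. E w' u} = {}"
      if "w \<in> W" "w' \<in> W" "w \<noteq> w'" "3 \<le> card {u\<in>N. E w u}" for w w'
      using W_large_codeg_disjoint that large[OF that(2)] by (simp add: codeg_def)
    show "(\<Sum>w\<in>W. card {u\<in>N. E w u}) + 2 = 2 * card W + card N0"
      using sum_eq by (simp add: codeg_def)
  qed
  then show nbrs_W: "{u\<in>N. E w u} = N0" if "w \<in> W" for w
    using that by blast
  show "N1 = {}"
  proof (rule ccontr)
    assume "N1 \<noteq> {}"
    have "y u < 1" if u: "u \<in> N1" for u
    proof (rule N1_without_W_neighbours_lt_1[OF u])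
      show "\<not> E u w" if "w \<in> W" for w
        using nbrs_W[OF that] u N0_N1_disjoint edge_sym by (auto simp: N1_def)
    qed
    then have "(\<Sum>u\<in>N1. y u) < (\<Sum>u\<in>N1. 1)"
      using \<open>N1 \<noteq> {}\<close> finite_N by (intro sum_strict_mono) (auto simp: N1_def)
    then show False using sum_N1 by simp
  qed
qed

theorem graph_iso_K2: "graph_iso V E {0..<card V} (K2_edges (card V))"
proof -
  obtain w where w: "w \<in> W" "2 \<le> codeg w"
    using low_codegree_impossible by force
  then have "N1 = {}" and nbrs_W: "\<And>w. w \<in> W \<Longrightarrow> {u\<in>N. E w u} = N0"
    using high_codegree_structure by blast+
  then have N0_eq: "N0 = N" using N_eq_N0_Un_N1 by simp
  show ?thesis
  proof (rule graph_iso_K2_if_W_complete_to_N)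
    show "\<not> E u z" if "u \<in> N" "z \<in> N" for u z
    proof -
      have "codeg u = 0" using that(1) N0_eq unfolding N0_def by blast
      then show ?thesis using that finite_N by (auto simp: codeg_def card_eq_0_iff)
    qed
    show "E w u" if "w \<in> W" "u \<in> N" for w u
      using nbrs_W[OF that(1)] that(2) N0_eq by blast
    show "W \<noteq> {}" using w by auto
    show "2 \<le> card N"
      using w(2) card_mono[OF finite_N, of "{u\<in>N. E w u}"] by (auto simp: codeg_def)
  qed
qed

end

lemma chordless_large_eigenvalue_iso_K2:
  assumes G: "simple_graph V E" and chordless: "\<not> has_chorded_cycle V E"
    and n: "card V = n" "6 \<le> n"
    and eig: "adj_eigenvalue V E l" and large: "sqrt (2 * real n - 4) \<le> l"
  shows "graph_iso V E {0..<n} (K2_edges n)"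
proof -
  have "finite V" using G by (simp add: simple_graph_def)
  obtain v y where "v \<in> V" "y v = 1" "\<And>u. u \<in> V \<Longrightarrow> \<bar>y u\<bar> \<le> 1"
    "\<And>u. u \<in> V \<Longrightarrow> (\<Sum>w\<in>V. adj E u w * y w) = l * y u"
    by (rule adj_eigenvalue_normalised_eigenvector[OF \<open>finite V\<close> eig]) blast
  moreover have l_nonneg: "0 \<le> l" using large real_sqrt_ge_zero[of "2 * real n - 4"] n(2) by linarith
  moreover have "2 * real n - 4 \<le> l * l"
  proof -
    have "2 * real n - 4 = sqrt (2 * real n - 4) * sqrt (2 * real n - 4)"
      using n(2) by simp
    also have "\<dots> \<le> l * l" using large l_nonneg n(2) by (intro mult_mono) auto
    finally show ?thesis .
  qed
  ultimately interpret chordless_eigenvector V E v l y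
    using G chordless n by unfold_locales auto
  show ?thesis using graph_iso_K2 n(1) by simp
qed

theorem theorem1p1:
  fixes V :: "'a set" and E :: "'a \<Rightarrow> 'a \<Rightarrow> bool" and n :: nat
  assumes "simple_graph V E"
    and "card V = n" and "n \<ge> 6"
    and "spectral_radius V E \<ge> spectral_radius {0..<n} (K2_edges n)"
    and "\<not> graph_iso V E {0..<n} (K2_edges n)"
  shows "has_chorded_cycle V E"
proof (rule ccontr)
  assume chordless: "\<not> has_chorded_cycle V E"
  have "V \<noteq> {}" using assms(2,3) by auto
  have "sqrt (2 * real n - 4) \<le> spectral_radius {0..<n} (K2_edges n)"
    using K2_adj_eigenvalue[of n] assms(3) by (intro adj_eigenvalue_le_spectral_radius) simp_all
  also have "\<dots> \<le> spectral_radius V E" by (rule assms(4))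
  finally have "graph_iso V E {0..<n} (K2_edges n)"
    using adj_eigenvalue_spectral_radius[OF assms(1) \<open>V \<noteq> {}\<close>]
    by (intro chordless_large_eigenvalue_iso_K2[OF assms(1) chordless assms(2,3)])
  with assms(5) show False ..
qed

end
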